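(* For any matrix $Z=(Z_{ij})_{1\leq i,j\leq 3}$ of formal variables $Z_{ij}$, we have $$ \left(A|_{v = -p} \right)Z \left(\frac{\det(A)}{P(v)} A^{-1} \Big|_{v = -p}\right)=(U_{ij}X_j)_{1\leq i,j\leq 3} $$ with $pX_j\in R^{\mathrm{aux}}[Z_{ij},\, 1\leq i,j\leq 3]$, where $U=A|_{v=-p}$.
   Context: $p>3$ is prime, $\mathcal{O}$ is the ring of integers of a finite extension of $\mathbb{Q}_p$, and $P(v)=v+p$. Let $$ A = \begin{pmatrix} c_{11}+c_{11}^*(v+p)&c_{12}&c_{13}\\ vc_{21}&c_{22}+ c_{22}^*(v+p) &c_{23}\\ vc_{31}&vc_{32}&c_{33}+c_{33}^*(v+p) \end{pmatrix}. $$ $R^{\mathrm{aux}}$ is the $p$-saturation of the quotient of $\mathcal{O}[c_{ij},(c^{*}_{ii})^{\pm 1},\,1\leq i,j\leq 3]$ by the relations: all $2\times 2$ minors of $U=A|_{v=-p}=\begin{pmatrix}c_{11}&c_{12}&c_{13}\\-pc_{21}&c_{22}&c_{23}\\-pc_{31}&-pc_{32}&c_{33}\end{pmatrix}$ vanish, and $c_{11}c^*_{22}c^*_{33}+c_{22}c^*_{33}c^*_{11}+c_{33}c^*_{11}c^*_{22}-c_{11}^*c_{23}c_{32}-c_{22}^*c_{13}c_{31}-c_{33}^*c_{12}c_{21}+c_{21}c_{13}c_{32}=0$. Then $\frac{\det(A)}{P(v)}A^{-1}|_{v=-p}$ is the matrix $$\begin{pmatrix} c_{22}^* c_{33} + c_{33}^*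 c_{22} - c_{23} c_{32} & c_{13} c_{32} - c^*_{33} c_{12} & -c_{22}^* c_{13}\\ p c_{33}^* c_{21} & c_{11}^* c_{33} + c_{33}^* c_{11} - c_{13} c_{31}&c_{13} c_{21} - c_{11}^*c_{23}\\ -p c_{21} c_{32} + p c^*_{22} c_{31} & pc_{11}^* c_{32} & c_{11}^* c_{22} + c_{22}^* c_{11} - c_{12} c_{21} \end{pmatrix}.$$ It is known that $R^{\mathrm{aux}}$ is a domain in which every $c_{ij}$ is nonzero. *)

theory Defs
  imports Main "HOL-Library.Poly_Mapping" "HOL-Computational_Algebra.Primes"
begin

text \<open>The ring R[Z_ij, 1 \<le> i,j \<le> 3] of polynomials in the nine formal variables Z_ij
  over a commutative ring R, realised as finitely supported maps from monomials
  (finitely supported exponent vectors indexed by pairs (i,j)) to coefficients.\<close>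
type_synonym 'a mpolyZ = "((nat \<times> nat) \<Rightarrow>\<^sub>0 nat) \<Rightarrow>\<^sub>0 'a"

definition Zvar :: "nat \<Rightarrow> nat \<Rightarrow> 'a::comm_ring_1 mpolyZ" where
  "Zvar i j = Poly_Mapping.single (Poly_Mapping.single (i, j) 1) 1"

definition cst :: "'a::comm_ring_1 \<Rightarrow> 'a mpolyZ" where
  "cst a = Poly_Mapping.single 0 a"

text \<open>U = A at v = -p, entries indexed by 1..3; c i j stands for c_ij, p is the prime.\<close>
definition Umat :: "nat \<Rightarrow> (nat \<Rightarrow> nat \<Rightarrow> 'a::comm_ring_1) \<Rightarrow> nat \<Rightarrow> nat \<Rightarrow> 'a" where
  "Umat p c i j = (if i \<le> j then c i j else - of_nat p * c i j)"

text \<open>The matrix (det A / P(v)) A^{-1} at v = -p, as given explicitly in the context;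
  cs i stands for c_ii^*.\<close>
definition Wmat :: "nat \<Rightarrow> (nat \<Rightarrow> nat \<Rightarrow> 'a::comm_ring_1) \<Rightarrow> (nat \<Rightarrow> 'a) \<Rightarrow> nat \<Rightarrow> nat \<Rightarrow> 'a" where
  "Wmat p c cs i j =
    (if i = 1 \<and> j = 1 then cs 2 * c 3 3 + cs 3 * c 2 2 - c 2 3 * c 3 2
     else if i = 1 \<and> j = 2 then c 1 3 * c 3 2 - cs 3 * c 1 2
     else if i = 1 \<and> j = 3 then - cs 2 * c 1 3
     else if i = 2 \<and> j = 1 then of_nat p * cs 3 * c 2 1
     else if i = 2 \<and> j = 2 then cs 1 * c 3 3 + cs 3 * c 1 1 - c 1 3 * c 3 1
     else if i = 2 \<and> j = 3 then c 1 3 * c 2 1 - cs 1 * c 2 3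
     else if i = 3 \<and> j = 1 then - of_nat p * c 2 1 * c 3 2 + of_nat p * cs 2 * c 3 1
     else if i = 3 \<and> j = 2 then of_nat p * cs 1 * c 3 2
     else if i = 3 \<and> j = 3 then cs 1 * c 2 2 + cs 2 * c 1 1 - c 1 2 * c 2 1
     else 0)"

text \<open>Defining relations of R^aux (besides the c_ii^* being units).\<close>
definition aux_relations :: "nat \<Rightarrow> (nat \<Rightarrow> nat \<Rightarrow> 'a::comm_ring_1) \<Rightarrow> (nat \<Rightarrow> 'a) \<Rightarrow> bool" where
  "aux_relations p c cs \<longleftrightarrow>
     (\<forall>i1\<in>{1..3}. \<forall>i2\<in>{1..3}. \<forall>j1\<in>{1..3}. \<forall>j2\<in>{1..3}.
        Umat p c i1 j1 * Umat p c i2 j2 - Umat p c i1 j2 * Umat p c i2 j1 = 0) \<and>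
     c 1 1 * cs 2 * cs 3 + c 2 2 * cs 3 * cs 1 + c 3 3 * cs 1 * cs 2
       - cs 1 * c 2 3 * c 3 2 - cs 2 * c 1 3 * c 3 1 - cs 3 * c 1 2 * c 2 1
       + c 2 1 * c 1 3 * c 3 2 = 0"

end

theory Submission
  imports Defs
begin

text \<open>Write W = (det A / P(v)) A^{-1} at v = -p. Since all 2\<times>2 minors of U vanish,
  U_ik U_mj = U_ij U_mk. So if every entry p W_lj is a combination \<Sum>_m a_m U_mj of the j-th
  column of U, then p U_ik W_lj = \<Sum>_m a_m U_ik U_mj = U_ij \<Sum>_m a_m U_mk, and the quotient
  does not depend on i; summing against Z_kl gives p X_j. That p W_lj lies in the ideal of the
  j-th column is checked entry by entry from the relations of R^aux; for the diagonal entries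
  this uses the cubic relation and that the c_ii^* are units.\<close>

lemma cst_mult: "cst (a * b) = cst a * (cst b :: 'a::comm_ring_1 mpolyZ)"
  by (simp add: cst_def mult_single)

lemma sum_1_to_3: "(\<Sum>k\<in>{1..3::nat}. f k) = f 1 + f 2 + f 3"
proof -
  have "{1..3::nat} = {1, 2, 3}" by auto
  then show ?thesis by (simp add: add.assoc)
qed

lemma ball_1_to_3: "(\<forall>i\<in>{1..3::nat}. P i) \<longleftrightarrow> P 1 \<and> P 2 \<and> P 3"
proof -
  have "{1..3::nat} = {1, 2, 3}" by auto
  then show ?thesis by simp
qed

lemma rank_one_factor:
  fixes U :: "nat \<Rightarrow> nat \<Rightarrow> 'a::comm_ring_1"
  assumes minors: "\<forall>i\<in>I. \<forall>j\<in>I. \<forall>m\<in>I. \<forall>k\<in>I. U i j * U m k = U i k * U m j"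
    and w: "d * w = (\<Sum>m\<in>I. a m * U m j)"
    and "i \<in> I" "j \<in> I" "k \<in> I"
  shows "d * (U i k * w) = U i j * (\<Sum>m\<in>I. a m * U m k)"
proof -
  have "U i j * (\<Sum>m\<in>I. a m * U m k) = (\<Sum>m\<in>I. a m * (U i j * U m k))"
    by (simp add: sum_distrib_left mult_ac)
  also have "\<dots> = (\<Sum>m\<in>I. a m * (U i k * U m j))"
    using minors assms(3-5) by (intro sum.cong) auto
  also have "\<dots> = U i k * (d * w)"
    by (simp add: w sum_distrib_left mult_ac)
  finally show ?thesis by (simp add: mult_ac)
qed

lemma rank_one_sandwich_factor:
  fixes U W :: "nat \<Rightarrow> nat \<Rightarrow> 'a::comm_ring_1"
  assumes minors: "\<forall>i\<in>I. \<forall>j\<in>I. \<forall>m\<in>I. \<forall>k\<in>I. U i j * U m k = U i k * U m j"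
    and column: "\<forall>l\<in>I. \<forall>j\<in>I. \<exists>a. d * W l j = (\<Sum>m\<in>I. a m * U m j)"
  shows "\<exists>X. \<forall>i\<in>I. \<forall>j\<in>I.
           cst d * (\<Sum>k\<in>I. \<Sum>l\<in>I. cst (U i k) * Zvar k l * cst (W l j)) = cst (U i j) * X j"
proof -
  obtain a where a: "\<And>l j. l \<in> I \<Longrightarrow> j \<in> I \<Longrightarrow> d * W l j = (\<Sum>m\<in>I. a l j m * U m j)"
    using column by metis
  define X where "X j = (\<Sum>k\<in>I. \<Sum>l\<in>I. cst (\<Sum>m\<in>I. a l j m * U m k) * Zvar k l)" for j
  have "cst d * (\<Sum>k\<in>I. \<Sum>l\<in>I. cst (U i k) * Zvar k l * cst (W l j)) = cst (U i j) * X j"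
    if "i \<in> I" "j \<in> I" for i j
  proof -
    have "cst d * (\<Sum>k\<in>I. \<Sum>l\<in>I. cst (U i k) * Zvar k l * cst (W l j))
        = (\<Sum>k\<in>I. \<Sum>l\<in>I. cst (d * (U i k * W l j)) * (Zvar k l :: 'a mpolyZ))"
      unfolding sum_distrib_left by (intro sum.cong refl) (simp add: cst_mult mult_ac)
    also have "\<dots> = (\<Sum>k\<in>I. \<Sum>l\<in>I. cst (U i j * (\<Sum>m\<in>I. a l j m * U m k)) * Zvar k l)"
      using rank_one_factor[OF minors a] that by (intro sum.cong refl) simp
    also have "\<dots> = cst (U i j) * X j"
      unfolding X_def sum_distrib_left[of "cst (U i j)"] by (simp add: cst_mult mult.assoc)
    finally show ?thesis .
  qed
  then show ?thesis by blast
qed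

lemma Umat_minors:
  assumes "aux_relations p c cs"
  shows "\<forall>i\<in>{1..3}. \<forall>j\<in>{1..3}. \<forall>m\<in>{1..3}. \<forall>k\<in>{1..3}.
           Umat p c i j * Umat p c m k = Umat p c i k * Umat p c m j"
  using assms unfolding aux_relations_def by auto

lemma aux_minor_relations:
  fixes c :: "nat \<Rightarrow> nat \<Rightarrow> 'a::idom"
  assumes rel: "aux_relations p c cs" and p: "of_nat p \<noteq> (0::'a)"
  defines "P \<equiv> of_nat p :: 'a"
  shows "c 1 1 * c 2 2 + P * c 1 2 * c 2 1 = 0"
    and "c 1 1 * c 3 3 + P * c 1 3 * c 3 1 = 0"
    and "c 2 2 * c 3 3 + P * c 2 3 * c 3 2 = 0"
    and "c 1 1 * c 2 3 + P * c 1 3 * c 2 1 = 0"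
    and "c 1 2 * c 3 3 + P * c 1 3 * c 3 2 = 0"
    and "c 2 2 * c 3 1 + P * c 2 1 * c 3 2 = 0"
    and "c 1 2 * c 2 3 = c 1 3 * c 2 2"
    and "c 1 1 * c 3 2 = c 1 2 * c 3 1"
    and "c 2 1 * c 3 3 = c 2 3 * c 3 1"
proof -
  have m: "Umat p c i1 j1 * Umat p c i2 j2 = Umat p c i1 j2 * Umat p c i2 j1"
    if "i1 \<in> {1..3}" "j1 \<in> {1..3}" "i2 \<in> {1..3}" "j2 \<in> {1..3}" for i1 j1 i2 j2
    using Umat_minors[OF rel] that by blast
  have P: "P \<noteq> 0" using p by (simp add: P_def)
  note simps = Umat_def P_def[symmetric] algebra_simps
  show "c 1 1 * c 2 2 + P * c 1 2 * c 2 1 = 0" using m[of 1 1 2 2] by (simp add: simps)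
  show "c 1 1 * c 3 3 + P * c 1 3 * c 3 1 = 0" using m[of 1 1 3 3] by (simp add: simps)
  show "c 2 2 * c 3 3 + P * c 2 3 * c 3 2 = 0" using m[of 2 2 3 3] by (simp add: simps)
  show "c 1 1 * c 2 3 + P * c 1 3 * c 2 1 = 0" using m[of 1 1 2 3] by (simp add: simps)
  show "c 1 2 * c 3 3 + P * c 1 3 * c 3 2 = 0" using m[of 1 2 3 3] by (simp add: simps)
  show "c 1 2 * c 2 3 = c 1 3 * c 2 2" using m[of 1 2 2 3] by (simp add: simps)
  have "P * (c 2 2 * c 3 1 + P * c 2 1 * c 3 2) = 0" using m[of 2 1 3 2] by (simp add: simps)
  then show "c 2 2 * c 3 1 + P * c 2 1 * c 3 2 = 0" using P by simp
  have "P * (c 1 1 * c 3 2 - c 1 2 * c 3 1) = 0" using m[of 1 1 3 2] by (simp add: simps)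
  then show "c 1 1 * c 3 2 = c 1 2 * c 3 1" using P by simp
  have "P * (c 2 1 * c 3 3 - c 2 3 * c 3 1) = 0" using m[of 2 1 3 3] by (simp add: simps)
  then show "c 2 1 * c 3 3 = c 2 3 * c 3 1" using P by simp
qed

lemma aux_diagonal_relations:
  fixes c :: "nat \<Rightarrow> nat \<Rightarrow> 'a::idom"
  assumes rel: "aux_relations p c cs" and p: "of_nat p \<noteq> (0::'a)"
  defines "P \<equiv> of_nat p :: 'a"
  shows "cs 1 * P * Wmat p c cs 1 1 = - c 1 1 * (Wmat p c cs 1 1 + P * cs 2 * cs 3)"
    and "cs 2 * P * Wmat p c cs 2 2 = - c 2 2 * (Wmat p c cs 2 2 + P * cs 1 * cs 3)"
    and "cs 3 * P * Wmat p c cs 3 3 = - c 3 3 * (Wmat p c cs 3 3 + P * cs 1 * cs 2)"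
proof -
  note minors = aux_minor_relations[OF rel p, folded P_def]
  have cubic: "c 1 1 * cs 2 * cs 3 + c 2 2 * cs 3 * cs 1 + c 3 3 * cs 1 * cs 2
       - cs 1 * c 2 3 * c 3 2 - cs 2 * c 1 3 * c 3 1 - cs 3 * c 1 2 * c 2 1
       + c 2 1 * c 1 3 * c 3 2 = 0"
    using rel unfolding aux_relations_def by blast
  show "cs 1 * P * Wmat p c cs 1 1 = - c 1 1 * (Wmat p c cs 1 1 + P * cs 2 * cs 3)"
    using minors cubic by (simp add: Wmat_def P_def[symmetric]) algebra
  show "cs 2 * P * Wmat p c cs 2 2 = - c 2 2 * (Wmat p c cs 2 2 + P * cs 1 * cs 3)"
    using minors cubic by (simp add: Wmat_def P_def[symmetric]) algebra
  show "cs 3 * P * Wmat p c cs 3 3 = - c 3 3 * (Wmat p c cs 3 3 + P * cs 1 * cs 2)"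
    using minors cubic by (simp add: Wmat_def P_def[symmetric]) algebra
qed

lemma column_combination_1_to_3:
  fixes U :: "nat \<Rightarrow> nat \<Rightarrow> 'a::comm_ring_1"
  shows "(\<exists>a. x = (\<Sum>m\<in>{1..3}. a m * U m j))
     \<longleftrightarrow> (\<exists>a1 a2 a3. x = a1 * U 1 j + a2 * U 2 j + a3 * U 3 j)"
proof
  assume "\<exists>a1 a2 a3. x = a1 * U 1 j + a2 * U 2 j + a3 * U 3 j"
  then obtain a1 a2 a3 where "x = a1 * U 1 j + a2 * U 2 j + a3 * U 3 j" by blast
  then show "\<exists>a. x = (\<Sum>m\<in>{1..3}. a m * U m j)"
    unfolding sum_1_to_3
    by (intro exI[of _ "\<lambda>m. if m = 1 then a1 else if m = 2 then a2 else a3"]) simp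
qed (unfold sum_1_to_3, blast)

lemma Wmat_in_column_ideal:
  fixes c :: "nat \<Rightarrow> nat \<Rightarrow> 'a::idom"
  assumes rel: "aux_relations p c cs" and p: "of_nat p \<noteq> (0::'a)"
    and units: "\<forall>i\<in>{1..3}. cs i dvd 1"
  shows "\<forall>l\<in>{1..3}. \<forall>j\<in>{1..3}.
           \<exists>a. of_nat p * Wmat p c cs l j = (\<Sum>m\<in>{1..3}. a m * Umat p c m j)"
proof -
  define P :: 'a where "P = of_nat p"
  define W where "W = Wmat p c cs"
  define U where "U = Umat p c"
  obtain t1 t2 t3 where t: "cs 1 * t1 = 1" "cs 2 * t2 = 1" "cs 3 * t3 = 1"
    using units unfolding ball_1_to_3 by (metis dvdE)
  note minors = aux_minor_relations[OF rel p, folded P_def]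
  note diagonal = aux_diagonal_relations[OF rel p, folded P_def W_def]
  note entries = W_def Wmat_def U_def Umat_def P_def[symmetric]
  have "P * W 1 1 = (- t1 * (W 1 1 + P * cs 2 * cs 3)) * U 1 1 + 0 * U 2 1 + 0 * U 3 1"
    using diagonal(1) t(1) by (simp add: U_def Umat_def) algebra
  moreover have "P * W 2 1 = 0 * U 1 1 + (- P * cs 3) * U 2 1 + 0 * U 3 1"
    by (simp add: entries)
  moreover have "P * W 3 1 = 0 * U 1 1 + 0 * U 2 1 + (- (P * cs 2 + c 2 2)) * U 3 1"
    using minors by (simp add: entries) algebra
  moreover have "P * W 1 2 = (- P * cs 3) * U 1 2 + 0 * U 2 2 + (- c 1 3) * U 3 2"
    by (simp add: entries) algebra
  moreover have "P * W 2 2 = 0 * U 1 2 + (- t2 * (W 2 2 + P * cs 1 * cs 3)) * U 2 2 + 0 * U 3 2"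
    using diagonal(2) t(2) by (simp add: U_def Umat_def) algebra
  moreover have "P * W 3 2 = 0 * U 1 2 + 0 * U 2 2 + (- P * cs 1) * U 3 2"
    by (simp add: entries)
  moreover have "P * W 1 3 = (- P * cs 2) * U 1 3 + 0 * U 2 3 + 0 * U 3 3"
    by (simp add: entries)
  moreover have "P * W 2 3 = 0 * U 1 3 + (- (c 1 1 + P * cs 1)) * U 2 3 + 0 * U 3 3"
    using minors by (simp add: entries) algebra
  moreover have "P * W 3 3 = 0 * U 1 3 + 0 * U 2 3 + (- t3 * (W 3 3 + P * cs 1 * cs 2)) * U 3 3"
    using diagonal(3) t(3) by (simp add: U_def Umat_def) algebra
  ultimately show ?thesis
    unfolding P_def[symmetric] W_def[symmetric] U_def[symmetric]
      column_combination_1_to_3 ball_1_to_3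
    by blast
qed

theorem lemma8p2:
  fixes p :: nat and c :: "nat \<Rightarrow> nat \<Rightarrow> 'a::idom" and cs :: "nat \<Rightarrow> 'a"
  assumes "prime p" and "p > 3"
    and "of_nat p \<noteq> (0::'a)"
    and "\<forall>i\<in>{1..3}. cs i dvd 1"
    and "aux_relations p c cs"
    and "\<forall>i\<in>{1..3}. \<forall>j\<in>{1..3}. c i j \<noteq> 0"
  shows "\<exists>pX :: nat \<Rightarrow> 'a mpolyZ. \<forall>i\<in>{1..3}. \<forall>j\<in>{1..3}.
           cst (of_nat p) * (\<Sum>k\<in>{1..3}. \<Sum>l\<in>{1..3}.
              cst (Umat p c i k) * Zvar k l * cst (Wmat p c cs l j))
           = cst (Umat p c i j) * pX j"
  using rank_one_sandwich_factor[OF Umat_minors Wmat_in_column_ideal] assms(3-5) by blast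

end
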